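(* Let $\mathfrak{L}_2(\alpha_1,\beta_1,\gamma_1,\alpha_2,\beta_2,\gamma_2):=P(Y(\alpha_1,\beta_1,\gamma_1),Z(\alpha_2,\beta_2,\gamma_2))$ for $(\alpha_i,\beta_i,\gamma_i)\in(-\pi,\pi]\times(0,\pi)\times(-\pi,\pi]$, $i=1,2$ (this function does not depend on $\alpha_2$, so regard it as a function of $(\alpha_1,\beta_1,\gamma_1,\beta_2,\gamma_2)$). Among points with $\alpha_1=\gamma_1=0$, the critical points of $\mathfrak{L}_2$ (gradient with respect to all variables equal to zero) are exactly the points $(0,\beta_1,0,\tfrac{\pi}{2},\gamma_2)$ with $\beta_1\in(0,\pi)$, $\gamma_2\in(-\pi,\pi]$ (and $\alpha_2$ arbitrary). At each of them $\mathfrak{L}_2=1/2$ and the Hessian with respect to $(\alpha_1,\beta_1,\gamma_1,\beta_2,\gamma_2)$ has eigenvalues $0,0,-1,-\tfrac12(1+\cos\beta_1),-\tfrac12(1-\cos\beta_1)$; in particular it is negative semidefinite and singular, and since $1/2<\tfrac{3}{50}(9+\sqrt6)=\max P$, these points are second-order traps.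
   Context: Basis of $\mathbb C^3$: $|1\rangle,|2\rangle,|3\rangle$ (standard basis). Spin-1 matrices in this basis: $J_y=\frac{1}{\sqrt2}\begin{pmatrix}0&-i&0\\ i&0&-i\\ 0&i&0\end{pmatrix}$, $J_z=\mathrm{diag}(1,0,-1)$. Define $Z(\alpha,\beta,\gamma)=e^{-i\alpha J_z}e^{-i\beta J_y}e^{-i\gamma J_z}$ and $Y(\alpha,\beta,\gamma)=e^{-i\alpha J_y}e^{-i\beta J_z}e^{-i\gamma J_y}$. Let $\mathcal R=\{Z(\alpha,\beta,\gamma):\alpha,\beta,\gamma\in\mathbb R\}\subset U(3)$ (the image of $SU(2)$ under its spin-1 representation, a compact 3-dimensional Lie subgroup). For $j\in\{1,2\}$ let $P_j=|j\rangle\langle j|$ and $\mathcal M_j(\rho)=P_j\rho P_j+(\mathbb I-P_j)\rho(\mathbb I-P_j)$ (non-selective measurement of the population of $|j\rangle$). Define $P(U_1,U_2)=\langle 2|U_2\,\mathcal M_1(U_1|1\rangle\langle 1|U_1^\dagger)\,U_2^\dagger|2\rangle$ for $U_1,U_2\in\mathcal R$ (transition probability $|1\rangle\to|2\rangle$ assisted by measurement of $|1\rangle$); its maximum over $\mathcal R\times\mathcal R$ is $\tfrac{3}{50}(9+\sqrt6)$. A second-order trap (for maximization) is a critical point that is not a global maximum and at which the Hessian is negative semidefinite but not negative definite. *)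

theory Defs
  imports "HOL-Analysis.Analysis"
begin

type_synonym cmat = "complex^3^3"

primrec mpow :: "cmat \<Rightarrow> nat \<Rightarrow> cmat" where
  "mpow A 0 = mat 1"
| "mpow A (Suc n) = A ** mpow A n"

definition mexp :: "cmat \<Rightarrow> cmat" where
  "mexp A = (\<chi> i j. (\<Sum>n. (mpow A n) $ i $ j / of_nat (fact n)))"

definition csmul :: "complex \<Rightarrow> cmat \<Rightarrow> cmat" where
  "csmul c A = (\<chi> i j. c * A $ i $ j)"

definition adj :: "cmat \<Rightarrow> cmat" where
  "adj A = (\<chi> i j. cnj (A $ j $ i))"

text \<open>Spin-1 matrices in the standard basis |1>,|2>,|3> (indices 1,2,3).\<close>
definition Jy :: cmat where
  "Jy = vector [vector [0, - \<i> / sqrt 2, 0],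
                vector [\<i> / sqrt 2, 0, - \<i> / sqrt 2],
                vector [0, \<i> / sqrt 2, 0]]"

definition Jz :: cmat where
  "Jz = vector [vector [1, 0, 0], vector [0, 0, 0], vector [0, 0, -1]]"

definition Zrot :: "real \<Rightarrow> real \<Rightarrow> real \<Rightarrow> cmat" where
  "Zrot a b c = mexp (csmul (- \<i> * of_real a) Jz) ** mexp (csmul (- \<i> * of_real b) Jy)
                ** mexp (csmul (- \<i> * of_real c) Jz)"

definition Yrot :: "real \<Rightarrow> real \<Rightarrow> real \<Rightarrow> cmat" where
  "Yrot a b c = mexp (csmul (- \<i> * of_real a) Jy) ** mexp (csmul (- \<i> * of_real b) Jz)
                ** mexp (csmul (- \<i> * of_real c) Jy)"

definition P1 :: cmat where
  "P1 = vector [vector [1, 0, 0], vector [0, 0, 0], vector [0, 0, 0]]"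

definition Meas1 :: "cmat \<Rightarrow> cmat" where
  "Meas1 \<rho> = P1 ** \<rho> ** P1 + (mat 1 - P1) ** \<rho> ** (mat 1 - P1)"

text \<open>Transition probability |1> -> |2>: <2| U2 M_1(U1 |1><1| U1^dag) U2^dag |2>
  (a real number; we take the real part of the complex matrix entry).\<close>
definition Ptrans :: "cmat \<Rightarrow> cmat \<Rightarrow> real" where
  "Ptrans U1 U2 = Re ((U2 ** Meas1 (U1 ** P1 ** adj U1) ** adj U2) $ 2 $ 2)"

text \<open>The landscape L_2; coordinates x = (alpha1, beta1, gamma1, beta2, gamma2),
  alpha2 given separately.\<close>
definition L2 :: "real \<Rightarrow> real^5 \<Rightarrow> real" where
  "L2 a2 x = Ptrans (Yrot (x$1) (x$2) (x$3)) (Zrot a2 (x$4) (x$5))"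

definition L2dom :: "(real^5) set" where
  "L2dom = {x. x$1 \<in> {-pi<..pi} \<and> x$2 \<in> {0<..<pi} \<and> x$3 \<in> {-pi<..pi}
              \<and> x$4 \<in> {0<..<pi} \<and> x$5 \<in> {-pi<..pi}}"

definition has_hessian :: "(real^'n \<Rightarrow> real) \<Rightarrow> real^'n^'n \<Rightarrow> real^'n \<Rightarrow> bool" where
  "has_hessian f H x \<longleftrightarrow> (\<exists>g. (\<forall>j. \<forall>\<^sub>F y in nhds x.
        ((\<lambda>t. f (y + t *\<^sub>R axis j 1)) has_real_derivative g j y) (at 0))
     \<and> (\<forall>i j. ((\<lambda>t. g j (x + t *\<^sub>R axis i 1)) has_real_derivative H $ i $ j) (at 0)))"

definition neg_semidef :: "real^'n^'n \<Rightarrow> bool" where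
  "neg_semidef H \<longleftrightarrow> (\<forall>v. v \<bullet> (H *v v) \<le> 0)"

definition neg_def :: "real^'n^'n \<Rightarrow> bool" where
  "neg_def H \<longleftrightarrow> (\<forall>v. v \<noteq> 0 \<longrightarrow> v \<bullet> (H *v v) < 0)"

definition second_order_trap :: "(real^'n \<Rightarrow> real) \<Rightarrow> (real^'n) set \<Rightarrow> real^'n \<Rightarrow> bool" where
  "second_order_trap f D x \<longleftrightarrow> x \<in> D \<and> (f has_derivative (\<lambda>h. 0)) (at x)
     \<and> (\<exists>y\<in>D. f x < f y)
     \<and> (\<exists>H. has_hessian f H x \<and> neg_semidef H \<and> \<not> neg_def H)"

end

theory Submission
  imports Defs
begin

text \<open>The rotation \<open>Z(\<alpha>\<^sub>2, \<beta>\<^sub>2, \<gamma>\<^sub>2)\<close> enters the transition probability only through its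
  second row, in which \<open>\<alpha>\<^sub>2\<close> does not occur. As \<open>J\<^sub>z\<close> and \<open>J\<^sub>y\<close> have eigenvalues \<open>1, 0, -1\<close>,
  their exponentials are explicit trigonometric matrices, and with \<open>u = Y|1\<rangle>\<close> the landscape
  is the trigonometric polynomial
  \<open>sin\<^sup>2 \<beta>\<^sub>2 / 2 * |u\<^sub>1|\<^sup>2 + |cos \<beta>\<^sub>2 * u\<^sub>2 - exp (-i \<gamma>\<^sub>2) * sin \<beta>\<^sub>2 * u\<^sub>3 / sqrt 2|\<^sup>2\<close>.
  On the slice \<open>\<alpha>\<^sub>1 = \<gamma>\<^sub>1 = 0\<close> we have \<open>u = (exp (-i \<beta>\<^sub>1), 0, 0)\<close>, so the landscape is
  \<open>sin\<^sup>2 \<beta>\<^sub>2 / 2\<close> and its derivative is \<open>sin \<beta>\<^sub>2 cos \<beta>\<^sub>2 d\<beta>\<^sub>2\<close>: the critical points are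
  \<open>\<beta>\<^sub>2 = \<pi>/2\<close>, with value \<open>1/2\<close>. There the Hessian couples only \<open>\<alpha>\<^sub>1\<close> and \<open>\<gamma>\<^sub>1\<close> and vanishes
  in the \<open>\<beta>\<^sub>1\<close>- and \<open>\<gamma>\<^sub>2\<close>-directions, along which the critical set extends; so it is negative
  semidefinite but singular, while the landscape reaches \<open>5/8\<close> elsewhere.\<close>

lemma has_derivative_vec_nth: "((\<lambda>y. y$k) has_derivative (\<lambda>h. h$k)) F"
  by (rule bounded_linear_imp_has_derivative[OF bounded_linear_vec_nth])

lemma has_derivative_divide_const:
  "(f has_derivative f') F \<Longrightarrow> ((\<lambda>x. f x / (c::real)) has_derivative (\<lambda>h. f' h / c)) F"
  using has_derivative_mult_left[of f f' F "inverse c"] by (simp add: divide_inverse)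

lemmas trig_poly_derivative_rules = has_derivative_vec_nth has_derivative_sin has_derivative_cos
  has_derivative_mult has_derivative_add has_derivative_diff has_derivative_minus
  has_derivative_const has_derivative_divide_const

lemma has_derivative_along_line:
  assumes "(f has_derivative f') (at y)"
  shows "((\<lambda>t. f (y + t *\<^sub>R v)) has_real_derivative f' v) (at 0)"
proof -
  have "((\<lambda>t. y + t *\<^sub>R v) has_derivative (\<lambda>t. t *\<^sub>R v)) (at 0)"
    by (auto intro!: derivative_eq_intros)
  moreover have "(f has_derivative f') (at (y + 0 *\<^sub>R v))"
    using assms by simp
  ultimately have "((\<lambda>t. f (y + t *\<^sub>R v)) has_derivative (\<lambda>t. f' (t *\<^sub>R v))) (at 0)"
    using has_derivative_compose by (fastforce simp: o_def)
  moreover have "f' (t *\<^sub>R v) = t * f' v" for t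
    using linear.scaleR[OF has_derivative_linear[OF assms]] by simp
  ultimately show ?thesis
    by (simp add: has_field_derivative_def mult_commute_abs)
qed

lemma det_diagonal_except_pair:
  fixes A :: "'a::comm_ring_1^'n^'n"
  assumes "k \<noteq> l"
    and offdiag: "\<And>i j. i \<noteq> j \<Longrightarrow> \<not> (i = k \<and> j = l) \<Longrightarrow> \<not> (i = l \<and> j = k) \<Longrightarrow> A$i$j = 0"
  shows "det A = (\<Prod>i\<in>UNIV. A$i$i) - A$k$l * A$l$k * (\<Prod>i\<in>UNIV - {k, l}. A$i$i)"
proof -
  let ?t = "Transposition.transpose k l"
  have nonzero_terms: "p = id \<or> p = ?t" if p: "p permutes UNIV" and nz: "\<forall>i. A$i$p i \<noteq> 0" for p
  proof -
    have p_cases: "p i = i \<or> (i = k \<and> p i = l) \<or> (i = l \<and> p i = k)" for i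
      using offdiag[of i "p i"] nz by metis
    have "p k \<noteq> p l" using p \<open>k \<noteq> l\<close> by (metis permutes_inj injD)
    then consider "p k = k" "p l = l" | "p k = l" "p l = k"
      using p_cases[of k] p_cases[of l] \<open>k \<noteq> l\<close> by auto
    then show ?thesis
    proof cases
      case 1
      then have "p i = i" for i using p_cases[of i] by auto
      then show ?thesis by auto
    next
      case 2
      have "p i = ?t i" for i
      proof (cases "i = k \<or> i = l")
        case True
        then show ?thesis using 2 by (auto simp: transpose_def)
      next
        case False
        then show ?thesis using p_cases[of i] by (auto simp: transpose_def)
      qed
      then show ?thesis by auto
    qed
  qed
  have "det A = (\<Sum>p\<in>{id, ?t}. of_int (sign p) * (\<Prod>i\<in>UNIV. A$i$p i))"
    unfolding det_def
  proof (rule sum.mono_neutral_right)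
    show "finite {p. p permutes (UNIV :: 'n set)}" by (simp add: finite_permutations)
    show "{id, ?t} \<subseteq> {p. p permutes UNIV}" by (auto simp: permutes_id permutes_swap_id)
    show "\<forall>p\<in>{p. p permutes UNIV} - {id, ?t}. of_int (sign p) * (\<Prod>i\<in>UNIV. A$i$p i) = 0"
    proof
      fix p assume "p \<in> {p. p permutes UNIV} - {id, ?t}"
      then obtain i where "A$i$p i = 0" using nonzero_terms by blast
      then have "(\<Prod>i\<in>UNIV. A$i$p i) = 0" by (meson UNIV_I finite prod_zero)
      then show "of_int (sign p) * (\<Prod>i\<in>UNIV. A$i$p i) = 0" by simp
    qed
  qed
  also have "\<dots> = (\<Prod>i\<in>UNIV. A$i$i) - (\<Prod>i\<in>UNIV. A$i$?t i)"
  proof -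
    have "id \<noteq> ?t" using \<open>k \<noteq> l\<close> by (metis id_apply transpose_apply_first)
    then show ?thesis using \<open>k \<noteq> l\<close> by (simp add: sign_id sign_swap_id)
  qed
  also have "(\<Prod>i\<in>UNIV. A$i$?t i) = A$k$l * A$l$k * (\<Prod>i\<in>UNIV - {k, l}. A$i$i)"
  proof -
    have "(\<Prod>i\<in>UNIV. A$i$?t i) = (\<Prod>i\<in>{k, l}. A$i$?t i) * (\<Prod>i\<in>UNIV - {k, l}. A$i$?t i)"
      by (simp add: prod.subset_diff[of "{k, l}" UNIV])
    then show ?thesis using \<open>k \<noteq> l\<close> by simp
  qed
  finally show ?thesis .
qed

lemma exhaust_5:
  fixes x :: 5
  shows "x = 1 \<or> x = 2 \<or> x = 3 \<or> x = 4 \<or> x = 5"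
proof (induct x)
  case (of_int z)
  then have "z = 0 \<or> z = 1 \<or> z = 2 \<or> z = 3 \<or> z = 4" by fastforce
  then show ?case by auto
qed

lemma UNIV_5: "UNIV = {1, 2, 3, 4, 5::5}"
  using exhaust_5 by auto

lemma sum_5: "sum f (UNIV::5 set) = f 1 + f 2 + f 3 + f 4 + f 5"
  unfolding UNIV_5 by (simp add: ac_simps)

lemma prod_5: "prod f (UNIV::5 set) = f 1 * f 2 * f 3 * f 4 * f 5"
  unfolding UNIV_5 by (simp add: ac_simps)

lemma sqrt2_mult_sqrt2: "sqrt 2 * sqrt 2 = (2::real)" "sqrt 2 * (sqrt 2 * x) = (2::real) * x"
  by (simp_all add: mult.assoc[symmetric])

lemma complex_sqrt2_mult_sqrt2: "complex_of_real (sqrt 2) * complex_of_real (sqrt 2) = 2"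
  by (simp flip: of_real_mult)

section \<open>Exponentials of the spin-1 generators\<close>

lemma matrix_mul_csmul_right: "A ** csmul c B = csmul c (A ** B)"
  by (simp add: vec_eq_iff matrix_matrix_mult_def csmul_def sum_distrib_left algebra_simps)

lemma csmul_matrix_mul_left: "csmul c A ** B = csmul c (A ** B)"
  by (simp add: vec_eq_iff matrix_matrix_mult_def csmul_def sum_distrib_left algebra_simps)

lemma csmul_csmul: "csmul a (csmul b A) = csmul (a * b) A"
  by (simp add: vec_eq_iff csmul_def)

lemma csmul_zero_left: "csmul 0 A = 0" and csmul_zero_right: "csmul c 0 = 0"
  by (simp_all add: vec_eq_iff csmul_def)

lemma mpow_csmul_spectral:
  assumes "J ** E1 = E1" "J ** E0 = 0" "J ** Em = csmul (-1) Em" "E1 + E0 + Em = mat 1"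
  shows "mpow (csmul x J) n = csmul (x^n) E1 + csmul (0^n) E0 + csmul ((-x)^n) Em"
proof (induction n)
  case 0
  then show ?case using assms(4) by (simp add: csmul_def vec_eq_iff)
next
  case (Suc n)
  then show ?case using assms
    by (simp add: matrix_add_ldistrib matrix_mul_csmul_right csmul_matrix_mul_left csmul_csmul
        csmul_zero_left csmul_zero_right mult.commute)
qed

lemma mexp_csmul_spectral:
  assumes "J ** E1 = E1" "J ** E0 = 0" "J ** Em = csmul (-1) Em" "E1 + E0 + Em = mat 1"
  shows "mexp (csmul x J) $ i $ j = E1$i$j * exp x + E0$i$j + Em$i$j * exp (-x)"
proof -
  have exp_sums: "(\<lambda>n. c * (y^n / of_nat (fact n))) sums (c * exp y)" for c y :: complex
    using sums_mult[OF exp_converges[of y]]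
    by (simp add: scaleR_conv_of_real divide_inverse mult.commute)
  have "(\<lambda>n. mpow (csmul x J) n $ i $ j / of_nat (fact n))
          sums (E1$i$j * exp x + E0$i$j * exp 0 + Em$i$j * exp (-x))"
    unfolding mpow_csmul_spectral[OF assms]
    apply (simp add: csmul_def add_divide_distrib)
    apply (intro sums_add)
    using exp_sums[of "E1$i$j" x] exp_sums[of "E0$i$j" 0] exp_sums[of "Em$i$j" "-x"]
    by (simp_all add: mult.commute)
  then show ?thesis by (simp add: mexp_def sums_iff)
qed

definition Ez_plus :: cmat where "Ez_plus = vector [vector [1,0,0], vector [0,0,0], vector [0,0,0]]"
definition Ez_zero :: cmat where "Ez_zero = vector [vector [0,0,0], vector [0,1,0], vector [0,0,0]]"
definition Ez_minus :: cmat where "Ez_minus = vector [vector [0,0,0], vector [0,0,0], vector [0,0,1]]"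

definition Ey_plus :: cmat where
  "Ey_plus = vector [vector [1/4, - \<i> / (2 * sqrt 2), -1/4],
                     vector [\<i> / (2 * sqrt 2), 1/2, - \<i> / (2 * sqrt 2)],
                     vector [-1/4, \<i> / (2 * sqrt 2), 1/4]]"
definition Ey_zero :: cmat where
  "Ey_zero = vector [vector [1/2,0,1/2], vector [0,0,0], vector [1/2,0,1/2]]"
definition Ey_minus :: cmat where
  "Ey_minus = vector [vector [1/4, \<i> / (2 * sqrt 2), -1/4],
                      vector [- \<i> / (2 * sqrt 2), 1/2, \<i> / (2 * sqrt 2)],
                      vector [-1/4, - \<i> / (2 * sqrt 2), 1/4]]"

lemmas cmat_simps = vec_eq_iff forall_3 matrix_matrix_mult_def sum_3 csmul_def mat_def

lemma Jz_spectral: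
  "Jz ** Ez_plus = Ez_plus" "Jz ** Ez_zero = 0" "Jz ** Ez_minus = csmul (-1) Ez_minus"
  "Ez_plus + Ez_zero + Ez_minus = mat 1"
  by (simp_all add: cmat_simps Jz_def Ez_plus_def Ez_zero_def Ez_minus_def)

lemma Jy_spectral:
  "Jy ** Ey_plus = Ey_plus" "Jy ** Ey_zero = 0" "Jy ** Ey_minus = csmul (-1) Ey_minus"
  "Ey_plus + Ey_zero + Ey_minus = mat 1"
  by (simp_all add: cmat_simps Jy_def Ey_plus_def Ey_zero_def Ey_minus_def field_simps
      complex_sqrt2_mult_sqrt2)

definition phase_diag :: "real \<Rightarrow> cmat" where
  "phase_diag a = vector [vector [cis (-a), 0, 0], vector [0, 1, 0], vector [0, 0, cis a]]"

definition wigner_d :: "real \<Rightarrow> cmat" where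
  "wigner_d b = vector
     [vector [of_real ((1 + cos b) / 2), of_real (- sin b / sqrt 2), of_real ((1 - cos b) / 2)],
      vector [of_real (sin b / sqrt 2), of_real (cos b), of_real (- sin b / sqrt 2)],
      vector [of_real ((1 - cos b) / 2), of_real (sin b / sqrt 2), of_real ((1 + cos b) / 2)]]"

lemma mexp_Jz: "mexp (csmul (- \<i> * of_real a) Jz) = phase_diag a"
  by (simp add: vec_eq_iff forall_3 mexp_csmul_spectral[OF Jz_spectral]
      Ez_plus_def Ez_zero_def Ez_minus_def phase_diag_def cis_conv_exp)

lemma mexp_Jy: "mexp (csmul (- \<i> * of_real b) Jy) = wigner_d b"
  by (simp add: vec_eq_iff forall_3 mexp_csmul_spectral[OF Jy_spectral]
      Ey_plus_def Ey_zero_def Ey_minus_def wigner_d_def complex_eq_iff Re_exp Im_exp)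

lemma Zrot_row2:
  "Zrot a b c $ 2 $ 1 = Complex (sin b / sqrt 2 * cos c) (- sin b / sqrt 2 * sin c)"
  "Zrot a b c $ 2 $ 2 = of_real (cos b)"
  "Zrot a b c $ 2 $ 3 = Complex (- sin b / sqrt 2 * cos c) (- sin b / sqrt 2 * sin c)"
  unfolding Zrot_def mexp_Jz mexp_Jy
  by (simp_all add: matrix_matrix_mult_def sum_3 phase_diag_def wigner_d_def complex_eq_iff)

definition u1_re :: "real^5 \<Rightarrow> real" where
  "u1_re y = cos (y$2) * (1 + cos (y$1) * cos (y$3)) / 2 - sin (y$1) * sin (y$3) / 2"
definition u1_im :: "real^5 \<Rightarrow> real" where
  "u1_im y = - sin (y$2) * (cos (y$1) + cos (y$3)) / 2"
definition u2_re :: "real^5 \<Rightarrow> real" where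
  "u2_re y = (sin (y$1) * cos (y$2) * cos (y$3) + cos (y$1) * sin (y$3)) / sqrt 2"
definition u2_im :: "real^5 \<Rightarrow> real" where
  "u2_im y = - sin (y$1) * sin (y$2) / sqrt 2"
definition u3_re :: "real^5 \<Rightarrow> real" where
  "u3_re y = cos (y$2) * (1 - cos (y$1) * cos (y$3)) / 2 + sin (y$1) * sin (y$3) / 2"
definition u3_im :: "real^5 \<Rightarrow> real" where
  "u3_im y = sin (y$2) * (cos (y$1) - cos (y$3)) / 2"

lemmas u_defs = u1_re_def u1_im_def u2_re_def u2_im_def u3_re_def u3_im_def

lemma Yrot_col1:
  "Yrot (y$1) (y$2) (y$3) $ 1 $ 1 = Complex (u1_re y) (u1_im y)"
  "Yrot (y$1) (y$2) (y$3) $ 2 $ 1 = Complex (u2_re y) (u2_im y)"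
  "Yrot (y$1) (y$2) (y$3) $ 3 $ 1 = Complex (u3_re y) (u3_im y)"
  unfolding Yrot_def mexp_Jz mexp_Jy
  by (simp_all add: matrix_matrix_mult_def sum_3 phase_diag_def wigner_d_def complex_eq_iff
      u_defs field_simps sqrt2_mult_sqrt2)

section \<open>The landscape as a trigonometric polynomial\<close>

lemma Ptrans_eq:
  "Ptrans U1 U2 = (cmod (U2$2$1))^2 * (cmod (U1$1$1))^2
     + (cmod (U2$2$2 * U1$2$1 + U2$2$3 * U1$3$1))^2"
proof -
  have state: "U1 ** P1 ** adj U1 = (\<chi> i j. U1$i$1 * cnj (U1$j$1))"
    by (simp add: vec_eq_iff matrix_matrix_mult_def sum_3 P1_def adj_def)
  have measured: "Meas1 (\<chi> i j. f i j) = (\<chi> i j. if (i = 1) = (j = 1) then f i j else 0)" for f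
    by (simp add: vec_eq_iff forall_3 matrix_matrix_mult_def sum_3 P1_def Meas1_def mat_def)
  have entry: "(U2 ** Meas1 (U1 ** P1 ** adj U1) ** adj U2)$2$2 =
     (U2$2$1 * cnj (U2$2$1)) * (U1$1$1 * cnj (U1$1$1))
     + (U2$2$2 * U1$2$1 + U2$2$3 * U1$3$1) * cnj (U2$2$2 * U1$2$1 + U2$2$3 * U1$3$1)"
    unfolding state measured by (simp add: matrix_matrix_mult_def sum_3 adj_def algebra_simps)
  have norm_sq: "(cmod z)^2 = Re (z * cnj z)" for z
    by (simp flip: complex_norm_square)
  show ?thesis
    unfolding Ptrans_def entry norm_sq by simp
qed

definition w_re :: "real^5 \<Rightarrow> real" where
  "w_re y = cos (y$4) * u2_re y - sin (y$4) / sqrt 2 * (cos (y$5) * u3_re y - sin (y$5) * u3_im y)"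
definition w_im :: "real^5 \<Rightarrow> real" where
  "w_im y = cos (y$4) * u2_im y - sin (y$4) / sqrt 2 * (cos (y$5) * u3_im y + sin (y$5) * u3_re y)"

definition landscape :: "real^5 \<Rightarrow> real" where
  "landscape y = (sin (y$4))^2 / 2 * ((u1_re y)^2 + (u1_im y)^2) + (w_re y)^2 + (w_im y)^2"

lemma L2_eq_landscape: "L2 a2 = landscape"
proof
  fix x :: "real^5"
  have "(sin b / sqrt 2 * cos c)^2 + (- sin b / sqrt 2 * sin c)^2 = (sin b)^2 / 2" for b c :: real
    by (simp add: sin_squared_eq field_simps)
  then have "(cmod (Zrot a2 (x$4) (x$5) $ 2 $ 1))^2 = (sin (x$4))^2 / 2"
    unfolding Zrot_row2 cmod_power2 by simp
  moreover have "(cmod (Zrot a2 (x$4) (x$5) $ 2 $ 2 * Yrot (x$1) (x$2) (x$3) $ 2 $ 1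
                   + Zrot a2 (x$4) (x$5) $ 2 $ 3 * Yrot (x$1) (x$2) (x$3) $ 3 $ 1))^2
      = (w_re x)^2 + (w_im x)^2"
    unfolding Zrot_row2 Yrot_col1 cmod_power2 w_re_def w_im_def by (simp add: algebra_simps)
  ultimately show "L2 a2 x = landscape x"
    unfolding L2_def Ptrans_eq landscape_def by (simp add: Yrot_col1 cmod_power2)
qed

section \<open>The derivative of the landscape\<close>

definition du1_re :: "real^5 \<Rightarrow> real^5 \<Rightarrow> real" where
  "du1_re y h =
     - (cos (y$2) * sin (y$1) * cos (y$3) + cos (y$1) * sin (y$3)) / 2 * h$1
     - sin (y$2) * (1 + cos (y$1) * cos (y$3)) / 2 * h$2
     - (cos (y$2) * cos (y$1) * sin (y$3) + sin (y$1) * cos (y$3)) / 2 * h$3"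
definition du1_im :: "real^5 \<Rightarrow> real^5 \<Rightarrow> real" where
  "du1_im y h = sin (y$2) * sin (y$1) / 2 * h$1 - cos (y$2) * (cos (y$1) + cos (y$3)) / 2 * h$2
     + sin (y$2) * sin (y$3) / 2 * h$3"
definition du2_re :: "real^5 \<Rightarrow> real^5 \<Rightarrow> real" where
  "du2_re y h =
     (cos (y$1) * cos (y$2) * cos (y$3) - sin (y$1) * sin (y$3)) / sqrt 2 * h$1
     - sin (y$1) * sin (y$2) * cos (y$3) / sqrt 2 * h$2
     + (cos (y$1) * cos (y$3) - sin (y$1) * cos (y$2) * sin (y$3)) / sqrt 2 * h$3"
definition du2_im :: "real^5 \<Rightarrow> real^5 \<Rightarrow> real" where
  "du2_im y h = - cos (y$1) * sin (y$2) / sqrt 2 * h$1 - sin (y$1) * cos (y$2) / sqrt 2 * h$2"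
definition du3_re :: "real^5 \<Rightarrow> real^5 \<Rightarrow> real" where
  "du3_re y h =
     (cos (y$2) * sin (y$1) * cos (y$3) + cos (y$1) * sin (y$3)) / 2 * h$1
     - sin (y$2) * (1 - cos (y$1) * cos (y$3)) / 2 * h$2
     + (cos (y$2) * cos (y$1) * sin (y$3) + sin (y$1) * cos (y$3)) / 2 * h$3"
definition du3_im :: "real^5 \<Rightarrow> real^5 \<Rightarrow> real" where
  "du3_im y h = - sin (y$2) * sin (y$1) / 2 * h$1 + cos (y$2) * (cos (y$1) - cos (y$3)) / 2 * h$2
     + sin (y$2) * sin (y$3) / 2 * h$3"

lemmas du_defs = du1_re_def du1_im_def du2_re_def du2_im_def du3_re_def du3_im_def

lemma u_has_derivative:
  "(u1_re has_derivative du1_re y) (at y)" "(u1_im has_derivative du1_im y) (at y)"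
  "(u2_re has_derivative du2_re y) (at y)" "(u2_im has_derivative du2_im y) (at y)"
  "(u3_re has_derivative du3_re y) (at y)" "(u3_im has_derivative du3_im y) (at y)"
  unfolding u_defs[abs_def]
  by (rule has_derivative_eq_rhs, (rule trig_poly_derivative_rules)+, rule ext,
      simp add: du_defs field_simps sqrt2_mult_sqrt2)+

definition dw_re :: "real^5 \<Rightarrow> real^5 \<Rightarrow> real" where
  "dw_re y h = - sin (y$4) * h$4 * u2_re y + cos (y$4) * du2_re y h
     - cos (y$4) * h$4 / sqrt 2 * (cos (y$5) * u3_re y - sin (y$5) * u3_im y)
     - sin (y$4) / sqrt 2 * (- sin (y$5) * h$5 * u3_re y + cos (y$5) * du3_re y h
                               - cos (y$5) * h$5 * u3_im y - sin (y$5) * du3_im y h)"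
definition dw_im :: "real^5 \<Rightarrow> real^5 \<Rightarrow> real" where
  "dw_im y h = - sin (y$4) * h$4 * u2_im y + cos (y$4) * du2_im y h
     - cos (y$4) * h$4 / sqrt 2 * (cos (y$5) * u3_im y + sin (y$5) * u3_re y)
     - sin (y$4) / sqrt 2 * (- sin (y$5) * h$5 * u3_im y + cos (y$5) * du3_im y h
                               + cos (y$5) * h$5 * u3_re y + sin (y$5) * du3_re y h)"

lemma w_has_derivative:
  "(w_re has_derivative dw_re y) (at y)" "(w_im has_derivative dw_im y) (at y)"
  unfolding w_re_def[abs_def] w_im_def[abs_def]
  by (rule has_derivative_eq_rhs, (rule trig_poly_derivative_rules u_has_derivative)+, rule ext,
      simp add: dw_re_def dw_im_def field_simps sqrt2_mult_sqrt2)+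

definition landscape_deriv :: "real^5 \<Rightarrow> real^5 \<Rightarrow> real" where
  "landscape_deriv y h = sin (y$4) * cos (y$4) * h$4 * ((u1_re y)^2 + (u1_im y)^2)
     + (sin (y$4))^2 * (u1_re y * du1_re y h + u1_im y * du1_im y h)
     + 2 * w_re y * dw_re y h + 2 * w_im y * dw_im y h"

lemma landscape_has_derivative: "(landscape has_derivative landscape_deriv y) (at y)"
  unfolding landscape_def[abs_def] power2_eq_square
  by (rule has_derivative_eq_rhs, (rule trig_poly_derivative_rules u_has_derivative w_has_derivative)+,
      rule ext, simp add: landscape_deriv_def field_simps power2_eq_square sqrt2_mult_sqrt2)

section \<open>Critical points on the slice\<close>

lemma u_on_slice:
  assumes "y$1 = 0" "y$3 = 0"
  shows "u1_re y = cos (y$2)" "u1_im y = - sin (y$2)" "u2_re y = 0" "u2_im y = 0"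
    "u3_re y = 0" "u3_im y = 0"
  using assms by (simp_all add: u_defs)

lemma landscape_on_slice:
  assumes "y$1 = 0" "y$3 = 0"
  shows "landscape y = (sin (y$4))^2 / 2"
  using assms by (simp add: landscape_def w_re_def w_im_def u_on_slice)

lemma landscape_deriv_on_slice:
  assumes "y$1 = 0" "y$3 = 0"
  shows "landscape_deriv y h = sin (y$4) * cos (y$4) * h$4"
  using assms by (simp add: landscape_deriv_def w_re_def w_im_def u_on_slice du_defs)

lemma landscape_critical_on_slice_iff:
  assumes "x \<in> L2dom" "x$1 = 0" "x$3 = 0"
  shows "(landscape has_derivative (\<lambda>h. 0)) (at x) \<longleftrightarrow> x$4 = pi/2"
proof -
  have "0 < x$4" "x$4 < pi" using assms(1) by (auto simp: L2dom_def)
  then have "sin (x$4) > 0" by (simp add: sin_gt_zero)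
  have "(landscape has_derivative (\<lambda>h. 0)) (at x) \<longleftrightarrow> landscape_deriv x = (\<lambda>h. 0)"
    using landscape_has_derivative has_derivative_unique by metis
  also have "\<dots> \<longleftrightarrow> sin (x$4) * cos (x$4) = 0"
    by (simp add: landscape_deriv_on_slice[OF assms(2,3)] fun_eq_iff)
       (metis axis_nth mult.right_neutral)
  also have "\<dots> \<longleftrightarrow> cos (x$4) = cos (pi/2)"
    using \<open>sin (x$4) > 0\<close> by simp
  also have "\<dots> \<longleftrightarrow> x$4 = pi/2"
  proof
    assume "cos (x$4) = cos (pi/2)"
    then show "x$4 = pi/2"
      using \<open>0 < x$4\<close> \<open>x$4 < pi\<close> cos_inj_pi[of "x$4" "pi/2"] by simp
  qed (rule arg_cong)
  finally show ?thesis .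
qed

lemma landscape_at_trap:
  assumes "x$1 = 0" "x$3 = 0" "x$4 = pi/2"
  shows "landscape x = 1/2"
  using landscape_on_slice[OF assms(1,2)] unfolding assms(3) by simp

lemma landscape_exceeds_one_half: "\<exists>y\<in>L2dom. 1/2 < landscape y"
proof
  define y :: "real^5" where "y = (\<chi> k. if k = 1 then 0 else if k = 4 then pi/4 else pi/2)"
  have coords: "y$1 = 0" "y$2 = pi/2" "y$3 = pi/2" "y$4 = pi/4" "y$5 = pi/2"
    by (simp_all add: y_def)
  show "y \<in> L2dom"
    using pi_gt_zero by (simp add: L2dom_def coords)
  have "landscape y = 5/8"
    by (simp add: landscape_def w_re_def w_im_def u_defs coords sin_45 cos_45
        power2_eq_square field_simps sqrt2_mult_sqrt2)
  then show "1/2 < landscape y" by simp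
qed

section \<open>The Hessian at the critical points\<close>

definition trap_hessian :: "real \<Rightarrow> real^5^5" where
  "trap_hessian b = (\<chi> i j.
     if (i = 1 \<and> j = 1) \<or> (i = 3 \<and> j = 3) then -1/2
     else if (i = 1 \<and> j = 3) \<or> (i = 3 \<and> j = 1) then - cos b / 2
     else if i = 4 \<and> j = 4 then -1 else 0)"

lemma landscape_deriv_has_derivative_at_trap:
  assumes "x$1 = 0" "x$3 = 0" "x$4 = pi/2"
  shows "((\<lambda>y. landscape_deriv y v) has_derivative (\<lambda>h. h \<bullet> (trap_hessian (x$2) *v v))) (at x)"
  unfolding landscape_deriv_def dw_re_def dw_im_def du_defs power2_eq_square
  apply (rule has_derivative_eq_rhs)
   apply (rule trig_poly_derivative_rules u_has_derivative w_has_derivative)+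
  apply (rule ext)
  apply (simp add: assms u_on_slice w_re_def w_im_def du_defs inner_vec_def sum_5
      matrix_vector_mult_def trap_hessian_def field_simps sqrt2_mult_sqrt2)
  using sin_cos_squared_add3[of "x$2"] by algebra

lemma has_hessian_landscape_at_trap:
  assumes "x$1 = 0" "x$3 = 0" "x$4 = pi/2"
  shows "has_hessian landscape (trap_hessian (x$2)) x"
  unfolding has_hessian_def
proof (intro exI conjI allI)
  fix i j :: 5
  show "\<forall>\<^sub>F y in nhds x. ((\<lambda>t. landscape (y + t *\<^sub>R axis j 1))
          has_real_derivative landscape_deriv y (axis j 1)) (at 0)"
    by (intro always_eventually allI has_derivative_along_line landscape_has_derivative)
  have "axis i 1 \<bullet> (trap_hessian (x$2) *v axis j 1) = trap_hessian (x$2) $ i $ j"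
    by (simp add: matrix_vector_mult_basis inner_axis' column_def)
  then show "((\<lambda>t. landscape_deriv (x + t *\<^sub>R axis i 1) (axis j 1))
          has_real_derivative trap_hessian (x$2) $ i $ j) (at 0)"
    using has_derivative_along_line[OF landscape_deriv_has_derivative_at_trap[OF assms],
        of "axis i 1" "axis j 1"] by simp
qed

lemma det_trap_hessian_pattern:
  fixes A :: "real^5^5"
  assumes "\<And>i j. i \<noteq> j \<Longrightarrow> \<not> (i = 1 \<and> j = 3) \<Longrightarrow> \<not> (i = 3 \<and> j = 1) \<Longrightarrow> A$i$j = 0"
  shows "det A = A$1$1 * A$2$2 * A$3$3 * A$4$4 * A$5$5 - A$1$3 * A$3$1 * (A$2$2 * A$4$4 * A$5$5)"
proof -
  have "det A = (\<Prod>i\<in>UNIV. A$i$i) - A$1$3 * A$3$1 * (\<Prod>i\<in>UNIV - {1, 3}. A$i$i)"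
    by (rule det_diagonal_except_pair) (simp_all add: assms)
  moreover have "UNIV - {1, 3} = {2, 4, 5::5}"
    using exhaust_5 by auto
  ultimately show ?thesis
    by (simp add: prod_5)
qed

lemma trap_hessian_offdiag:
  "i \<noteq> j \<Longrightarrow> \<not> (i = 1 \<and> j = 3) \<Longrightarrow> \<not> (i = 3 \<and> j = 1) \<Longrightarrow> trap_hessian b $ i $ j = 0"
  by (auto simp: trap_hessian_def)

lemma trap_hessian_charpoly:
  "det (t *\<^sub>R mat 1 - trap_hessian b) =
     t^2 * (t + 1) * (t + (1 + cos b) / 2) * (t + (1 - cos b) / 2)"
proof -
  have "det (t *\<^sub>R mat 1 - trap_hessian b) =
      (t + 1/2) * t * (t + 1/2) * (t + 1) * t - (cos b / 2) * (cos b / 2) * (t * (t + 1) * t)"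
    by (subst det_trap_hessian_pattern) (simp_all add: trap_hessian_offdiag mat_def,
        simp add: trap_hessian_def)
  then show ?thesis by (simp add: field_simps power2_eq_square)
qed

lemma det_trap_hessian: "det (trap_hessian b) = 0"
  by (subst det_trap_hessian_pattern) (simp_all add: trap_hessian_offdiag, simp add: trap_hessian_def)

lemma trap_hessian_symmetric: "transpose (trap_hessian b) = trap_hessian b"
proof -
  have "trap_hessian b $ i $ j = trap_hessian b $ j $ i" for i j
    by (simp add: trap_hessian_def conj_commute)
  then show ?thesis by (simp add: vec_eq_iff transpose_def)
qed

lemma trap_hessian_quadratic_form:
  "v \<bullet> (trap_hessian b *v v) = - ((v$1 + cos b * v$3)^2 + (sin b * v$3)^2) / 2 - (v$4)^2"
proof -
  have "v \<bullet> (trap_hessian b *v v) = - ((v$1)^2 + (v$3)^2) / 2 - cos b * v$1 * v$3 - (v$4)^2"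
    by (simp add: inner_vec_def sum_5 matrix_vector_mult_def trap_hessian_def
        power2_eq_square algebra_simps)
  then show ?thesis
    using sin_cos_squared_add[of b] by algebra
qed

lemma trap_hessian_neg_semidef: "neg_semidef (trap_hessian b)"
  unfolding neg_semidef_def trap_hessian_quadratic_form
proof
  fix v :: "real^5"
  have "0 \<le> ((v$1 + cos b * v$3)^2 + (sin b * v$3)^2) / 2 + (v$4)^2"
    by simp
  then show "- ((v$1 + cos b * v$3)^2 + (sin b * v$3)^2) / 2 - (v$4)^2 \<le> 0"
    by linarith
qed

lemma trap_hessian_not_neg_def: "\<not> neg_def (trap_hessian b)"
proof -
  have "axis 2 1 \<noteq> (0::real^5)" and "axis 2 1 \<bullet> (trap_hessian b *v axis 2 1) = 0"
    by (simp_all only: axis_eq_0_iff trap_hessian_quadratic_form) (simp_all add: axis_def)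
  then show ?thesis
    unfolding neg_def_def by (metis less_irrefl)
qed

lemma landscape_second_order_trap:
  assumes "x \<in> L2dom" "x$1 = 0" "x$3 = 0" "x$4 = pi/2"
  shows "second_order_trap landscape L2dom x"
  unfolding second_order_trap_def
proof (intro conjI)
  show "x \<in> L2dom" by (fact assms(1))
  show "(landscape has_derivative (\<lambda>h. 0)) (at x)"
    using landscape_critical_on_slice_iff assms by blast
  show "\<exists>y\<in>L2dom. landscape x < landscape y"
    unfolding landscape_at_trap[OF assms(2-4)] by (fact landscape_exceeds_one_half)
  show "\<exists>H. has_hessian landscape H x \<and> neg_semidef H \<and> \<not> neg_def H"
    using has_hessian_landscape_at_trap[OF assms(2-4)] trap_hessian_neg_semidef
      trap_hessian_not_neg_def by blast
qed

theorem lemma2: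
  fixes a2 :: real
  assumes "a2 \<in> {-pi<..pi}"
  shows "(\<forall>a2'. \<forall>x. L2 a2' x = L2 a2 x)
    \<and> (\<forall>x\<in>L2dom. x$1 = 0 \<and> x$3 = 0 \<longrightarrow>
          ((L2 a2 has_derivative (\<lambda>h. 0)) (at x) \<longleftrightarrow> x$4 = pi/2))
    \<and> (\<forall>x\<in>L2dom. x$1 = 0 \<and> x$3 = 0 \<and> x$4 = pi/2 \<longrightarrow>
          L2 a2 x = 1/2
        \<and> (\<exists>H. has_hessian (L2 a2) H x
             \<and> transpose H = H
             \<and> (\<forall>t::real. det (t *\<^sub>R mat 1 - H) =
                   t^2 * (t + 1) * (t + (1 + cos (x$2)) / 2) * (t + (1 - cos (x$2)) / 2))
             \<and> neg_semidef H \<and> \<not> neg_def H \<and> det H = 0)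
        \<and> 1/2 < 3/50 * (9 + sqrt 6)
        \<and> second_order_trap (L2 a2) L2dom x)"
  unfolding L2_eq_landscape
proof (intro conjI ballI impI allI)
  fix x assume "x \<in> L2dom" "x$1 = 0 \<and> x$3 = 0"
  then show "(landscape has_derivative (\<lambda>h. 0)) (at x) \<longleftrightarrow> x$4 = pi/2"
    using landscape_critical_on_slice_iff by blast
next
  fix x assume x: "x \<in> L2dom" "x$1 = 0 \<and> x$3 = 0 \<and> x$4 = pi/2"
  then show "landscape x = 1/2"
    using landscape_at_trap by blast
  show "\<exists>H. has_hessian landscape H x \<and> transpose H = H
          \<and> (\<forall>t::real. det (t *\<^sub>R mat 1 - H) =
                t^2 * (t + 1) * (t + (1 + cos (x$2)) / 2) * (t + (1 - cos (x$2)) / 2))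
          \<and> neg_semidef H \<and> \<not> neg_def H \<and> det H = 0"
    using x has_hessian_landscape_at_trap trap_hessian_symmetric trap_hessian_charpoly
      trap_hessian_neg_semidef trap_hessian_not_neg_def det_trap_hessian by blast
  show "1/2 < 3/50 * (9 + sqrt (6::real))"
    by (simp add: add_pos_nonneg)
  show "second_order_trap landscape L2dom x"
    using x landscape_second_order_trap by blast
qed simp

end
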